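(* Let $I$ be an ideal of a ring $R$. Then $R$ is uniquely weakly $I$-clean if and only if $R/I$ is semi Boolean and idempotents can be lifted uniquely weakly modulo $I$.
   Context: All rings are associative with identity; $Idem(R)$ is the set of idempotents of $R$. $R$ is uniquely weakly $I$-clean if for every $x\in R$ there exists a unique $e\in Idem(R)$ such that $x-e\in I$ or $x+e\in I$. A ring $A$ is semi Boolean if for every $x\in A$, $x^2=x$ or $x^2=-x$. Idempotents can be lifted uniquely weakly modulo $I$ if for every $x\in R$ with $x^2-x\in I$ there exists a unique $e\in Idem(R)$ with $x-e\in I$ or $x+e\in I$. *)

theory Defs
  imports "HOL-Algebra.Algebra"
begin

definition Idem_ring :: "('a, 'b) ring_scheme \<Rightarrow> 'a set" where
  "Idem_ring R = {e \<in> carrier R. monoid.mult R e e = e}"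

definition uniquely_weakly_I_clean :: "('a, 'b) ring_scheme \<Rightarrow> 'a set \<Rightarrow> bool" where
  "uniquely_weakly_I_clean R I \<longleftrightarrow>
     (\<forall>x \<in> carrier R. \<exists>!e. e \<in> Idem_ring R \<and> (a_minus R x e \<in> I \<or> add R x e \<in> I))"

definition semi_boolean :: "('a, 'b) ring_scheme \<Rightarrow> bool" where
  "semi_boolean A \<longleftrightarrow>
     (\<forall>x \<in> carrier A. monoid.mult A x x = x \<or> monoid.mult A x x = a_inv A x)"

definition idempotents_lift_uniquely_weakly :: "('a, 'b) ring_scheme \<Rightarrow> 'a set \<Rightarrow> bool" where
  "idempotents_lift_uniquely_weakly R I \<longleftrightarrow>
     (\<forall>x \<in> carrier R. a_minus R (monoid.mult R x x) x \<in> I \<longrightarrow>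
        (\<exists>!e. e \<in> Idem_ring R \<and> (a_minus R x e \<in> I \<or> add R x e \<in> I)))"

end

theory Submission
  imports Defs
begin

text \<open>The condition \<open>x - e \<in> I \<or> x + e \<in> I\<close> says \<open>x \<equiv> \<plusminus>e\<close> modulo \<open>I\<close>, and plus or minus
  an idempotent squares to plus or minus itself. Hence a uniquely weakly \<open>I\<close>-clean ring has a
  semi Boolean quotient, and unique weak lifting is the special case \<open>x\<^sup>2 - x \<in> I\<close> of cleanness.
  Conversely, if \<open>R/I\<close> is semi Boolean then \<open>x\<^sup>2 - x \<in> I\<close> or \<open>(-x)\<^sup>2 - (-x) = x\<^sup>2 + x \<in> I\<close>;
  in the second case one lifts \<open>-x\<close>, whose weak lifts are exactly those of \<open>x\<close>.\<close>

lemma (in ring) semi_boolean_elem_of_plus_minus_idem: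
  assumes "e \<in> carrier R" "e \<otimes> e = e" and "x = e \<or> x = \<ominus> e"
  shows "x \<otimes> x = x \<or> x \<otimes> x = \<ominus> x"
  using assms by (auto simp: l_minus r_minus)

context ideal
begin

lemma rcos_eq_iff_minus_mem:
  assumes "x \<in> carrier R" "y \<in> carrier R"
  shows "I +> x = I +> y \<longleftrightarrow> x \<ominus> y \<in> I"
  using a_rcos_module_minus[OF ring_axioms assms(2,1)] a_repr_independence' a_repr_independenceD assms
  by metis

lemma rcos_eq_neg_iff_add_mem:
  assumes "x \<in> carrier R" "y \<in> carrier R"
  shows "I +> x = \<ominus>\<^bsub>R Quot I\<^esub> (I +> y) \<longleftrightarrow> x \<oplus> y \<in> I"
proof -
  interpret quot: ring_hom_ring R "R Quot I" "(+>) I"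
    by (rule rcos_ring_hom_ring)
  have "\<ominus>\<^bsub>R Quot I\<^esub> (I +> y) = I +> (\<ominus> y)"
    using assms by simp
  moreover have "x \<ominus> \<ominus> y = x \<oplus> y"
    using assms by (simp add: minus_eq)
  ultimately show ?thesis
    using rcos_eq_iff_minus_mem[of x "\<ominus> y"] assms by simp
qed

lemma carrier_Quot_eq_image: "carrier (R Quot I) = (+>) I ` carrier R"
  by (auto simp: FactRing_def A_RCOSETS_def RCOSETS_def a_r_coset_def)

lemma rcos_semi_boolean_iff:
  assumes "x \<in> carrier R"
  shows "(I +> x) \<otimes>\<^bsub>R Quot I\<^esub> (I +> x) = I +> x \<or>
           (I +> x) \<otimes>\<^bsub>R Quot I\<^esub> (I +> x) = \<ominus>\<^bsub>R Quot I\<^esub> (I +> x)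
         \<longleftrightarrow> x \<otimes> x \<ominus> x \<in> I \<or> x \<otimes> x \<oplus> x \<in> I"
proof -
  interpret quot: ring_hom_ring R "R Quot I" "(+>) I"
    by (rule rcos_ring_hom_ring)
  show ?thesis
    using assms rcos_eq_iff_minus_mem[of "x \<otimes> x" x] rcos_eq_neg_iff_add_mem[of "x \<otimes> x" x]
    by simp
qed

lemma semi_boolean_Quot_iff:
  "semi_boolean (R Quot I) \<longleftrightarrow> (\<forall>x \<in> carrier R. x \<otimes> x \<ominus> x \<in> I \<or> x \<otimes> x \<oplus> x \<in> I)"
  unfolding semi_boolean_def carrier_Quot_eq_image using rcos_semi_boolean_iff by blast

lemma semi_boolean_mod_of_weak_lift:
  assumes "x \<in> carrier R" "e \<in> Idem_ring R" and "x \<ominus> e \<in> I \<or> x \<oplus> e \<in> I"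
  shows "x \<otimes> x \<ominus> x \<in> I \<or> x \<otimes> x \<oplus> x \<in> I"
proof -
  interpret quot: ring_hom_ring R "R Quot I" "(+>) I"
    by (rule rcos_ring_hom_ring)
  have e: "e \<in> carrier R" "e \<otimes> e = e"
    using assms(2) by (auto simp: Idem_ring_def)
  have "I +> x = I +> e \<or> I +> x = \<ominus>\<^bsub>R Quot I\<^esub> (I +> e)"
    using assms(1,3) e rcos_eq_iff_minus_mem rcos_eq_neg_iff_add_mem by blast
  then have "(I +> x) \<otimes>\<^bsub>R Quot I\<^esub> (I +> x) = I +> x \<or>
               (I +> x) \<otimes>\<^bsub>R Quot I\<^esub> (I +> x) = \<ominus>\<^bsub>R Quot I\<^esub> (I +> x)"
    using e by (intro quot.S.semi_boolean_elem_of_plus_minus_idem[of "I +> e"])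
      (auto simp flip: quot.hom_mult)
  then show ?thesis
    using assms(1) rcos_semi_boolean_iff by blast
qed

lemma neg_mem_iff:
  assumes "a \<in> carrier R"
  shows "\<ominus> a \<in> I \<longleftrightarrow> a \<in> I"
  using additive_subgroup.a_inv_closed[OF is_additive_subgroup, of "\<ominus> a"]
    additive_subgroup.a_inv_closed[OF is_additive_subgroup, of a] minus_minus[OF assms]
  by auto

lemma weak_lift_neg_iff:
  assumes "x \<in> carrier R" "e \<in> carrier R"
  shows "(\<ominus> x \<ominus> e \<in> I \<or> \<ominus> x \<oplus> e \<in> I) \<longleftrightarrow> (x \<ominus> e \<in> I \<or> x \<oplus> e \<in> I)"
proof -
  have "\<ominus> x \<ominus> e = \<ominus> (x \<oplus> e)" "\<ominus> x \<oplus> e = \<ominus> (x \<ominus> e)"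
    using assms by (simp_all add: minus_eq minus_add a_comm)
  then show ?thesis
    using assms neg_mem_iff by (auto simp: minus_eq)
qed

lemma unique_weak_lift_if_square_add_mem:
  assumes "idempotents_lift_uniquely_weakly R I" "x \<in> carrier R" and "x \<otimes> x \<oplus> x \<in> I"
  shows "\<exists>!e. e \<in> Idem_ring R \<and> (x \<ominus> e \<in> I \<or> x \<oplus> e \<in> I)"
proof -
  have "\<ominus> x \<otimes> \<ominus> x \<ominus> \<ominus> x = x \<otimes> x \<oplus> x"
    using assms(2) by (simp add: l_minus r_minus minus_eq)
  then have "\<exists>!e. e \<in> Idem_ring R \<and> (\<ominus> x \<ominus> e \<in> I \<or> \<ominus> x \<oplus> e \<in> I)"
    using assms unfolding idempotents_lift_uniquely_weakly_def by simp
  moreover have "e \<in> Idem_ring R \<and> (\<ominus> x \<ominus> e \<in> I \<or> \<ominus> x \<oplus> e \<in> I) \<longleftrightarrow>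
                   e \<in> Idem_ring R \<and> (x \<ominus> e \<in> I \<or> x \<oplus> e \<in> I)" for e
    using assms(2) weak_lift_neg_iff[of x e] by (auto simp: Idem_ring_def)
  ultimately show ?thesis
    by simp
qed

end

theorem mainTheorem7:
  fixes R (structure) and I :: "'a set"
  assumes "ring R" and "ideal I R"
  shows "uniquely_weakly_I_clean R I \<longleftrightarrow>
           semi_boolean (R Quot I) \<and> idempotents_lift_uniquely_weakly R I"
proof -
  interpret ideal I R by fact
  show ?thesis
  proof
    assume clean: "uniquely_weakly_I_clean R I"
    have "x \<otimes> x \<ominus> x \<in> I \<or> x \<otimes> x \<oplus> x \<in> I" if "x \<in> carrier R" for x
      using clean that semi_boolean_mod_of_weak_lift
      unfolding uniquely_weakly_I_clean_def by blast
    moreover have "idempotents_lift_uniquely_weakly R I"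
      using clean unfolding uniquely_weakly_I_clean_def idempotents_lift_uniquely_weakly_def
      by blast
    ultimately show "semi_boolean (R Quot I) \<and> idempotents_lift_uniquely_weakly R I"
      by (simp add: semi_boolean_Quot_iff)
  next
    assume "semi_boolean (R Quot I) \<and> idempotents_lift_uniquely_weakly R I"
    then have semi: "\<forall>x \<in> carrier R. x \<otimes> x \<ominus> x \<in> I \<or> x \<otimes> x \<oplus> x \<in> I"
      and lift: "idempotents_lift_uniquely_weakly R I"
      by (simp_all add: semi_boolean_Quot_iff)
    show "uniquely_weakly_I_clean R I"
      unfolding uniquely_weakly_I_clean_def
    proof
      fix x assume x: "x \<in> carrier R"
      then consider "x \<otimes> x \<ominus> x \<in> I" | "x \<otimes> x \<oplus> x \<in> I"
        using semi by blast
      then show "\<exists>!e. e \<in> Idem_ring R \<and> (x \<ominus> e \<in> I \<or> x \<oplus> e \<in> I)"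
      proof cases
        case 1
        with lift x show ?thesis
          unfolding idempotents_lift_uniquely_weakly_def by blast
      next
        case 2
        with lift x show ?thesis
          by (rule unique_weak_lift_if_square_add_mem)
      qed
    qed
  qed
qed

end
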